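(* Let $V_k=\gamma/k^\alpha$. (i) Let $m\ge1$, $n=2m$, and let $\mathcal{S}_m\subset\mathcal{S}_n\subset\mathcal{T}$ be nested subsets of sizes $m,n$ with regularized risks $R_m,R_n$ and minimizers $\mathbf{w}_m^*,\mathbf{w}_n^*$. Let $\mathbf{w}_m$ satisfy $\mathbb{E}[R_m(\mathbf{w}_m)-R_m(\mathbf{w}_m^* )]\le V_m$. Run accelerated gradient descent on $R_n$: $\tilde{\mathbf{w}}_0=\tilde{\mathbf{y}}_0=\mathbf{w}_m$ and $$\tilde{\mathbf{w}}_{k+1}=\tilde{\mathbf{y}}_k-\eta_n\nabla R_n(\tilde{\mathbf{y}}_k),\qquad \tilde{\mathbf{y}}_{k+1}=\tilde{\mathbf{w}}_{k+1}+\beta_n(\tilde{\mathbf{w}}_{k+1}-\tilde{\mathbf{w}}_k),$$ with $\eta_n=\frac{1}{cV_n+M}$ and $\beta_n=\frac{\sqrt{cV_n+M}-\sqrt{cV_n}}{\sqrt{cV_n+M}+\sqrt{cV_n}}$, and set $\mathbf{w}_n=\tilde{\mathbf{w}}_{s_n}$. If $$s_n\ge\sqrt{\frac{n^\alpha M+c\gamma}{c\gamma}}\,\log\left[6\cdot2^\alpha+(2^\alpha-1)\left(4+c\|\mathbf{w}^*\|^2\right)\right],$$ then $\mathbb{E}[R_n(\mathbf{w}_n)-R_n(\mathbf{w}_n^* )]\le V_n$. (ii) Moreover, suppose $N=2^q m_0$ for an integer $q\ge0$ and the sample sizes $n\in\{m_0,2m_0,\dots,N\}$ are used in turn (each stage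 initialized at the output of the previous one), with $s_n$ equal to the right-hand side of the bound in (i) at each stage, and where one AGD iteration on $R_n$ is counted as $n$ component-gradient evaluations. Then the total number of gradient evaluations $\sum_{n\in\{m_0,2m_0,\dots,N\}} n\,s_n$ is at most $$N\left[1+\log_2\!\left(\frac{N}{m_0}\right)+\frac{\sqrt{2^\alpha}}{\sqrt{2^\alpha}-1}\sqrt{\frac{N^\alpha M}{c\gamma}}\right]\log\left[6\cdot2^\alpha+(2^\alpha-1)\left(4+c\|\mathbf{w}^*\|^2\right)\right].$$
   Context: Let $Z$ be a random variable with distribution $P$ on a space $\mathcal{Z}$ and $f:\mathbb{R}^p\times\mathcal{Z}\to\mathbb{R}$ a loss function. The expected loss is $L(\mathbf{w})=\mathbb{E}_Z[f(\mathbf{w},Z)]$ and $\mathbf{w}^*$ denotes a minimizer of $L$. The training set $\mathcal{T}=\{z_1,\dots,z_N\}$ consists of $N$ independent samples from $P$. For a (fixed, data-independent) subset $\mathcal{S}\subseteq\mathcal{T}$ with $k$ elements, the empirical loss is $L_{\mathcal{S}}(\mathbf{w})=\frac1k\sum_{z\in\mathcal{S}}f(\mathbf{w},z)$; for the sets $\mathcal{S}_k$ we write $L_k=L_{\mathcal{S}_k}$. Statistical accuracy: $V_k=\gamma/k^\alpha$ with constants $\gamma>0$, $\alpha\in[0.5,1]$, and for every $k$ and every set $\mathcal{S}$ of $k$ independent samples from $P$, $\mathbb{E}[\sup_{\mathbf{w}}|L(\mathbf{w})-L_{\mathcal{S}}(\mathbf{w})|]\le V_k$. For a constant $c>0$,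 $R_k(\mathbf{w})=L_k(\mathbf{w})+\frac{cV_k}{2}\|\mathbf{w}\|^2$ with minimizer $\mathbf{w}_k^*$; thus $\nabla R_n(\mathbf{w})=\frac1n\sum_{z\in\mathcal{S}_n}\nabla f(\mathbf{w},z)+cV_n\mathbf{w}$. Assumption: for every $z$, $f(\cdot,z)$ is convex with $M$-Lipschitz continuous gradient ($M>0$). Expectations are over the training samples. *)

theory Defs
  imports "HOL-Probability.Probability"
begin

definition Vstat :: "real \<Rightarrow> real \<Rightarrow> nat \<Rightarrow> real" where
  "Vstat \<gamma> \<alpha> k = \<gamma> / (real k powr \<alpha>)"

definition pop_loss :: "'z measure \<Rightarrow> ('a \<Rightarrow> 'z \<Rightarrow> real) \<Rightarrow> 'a \<Rightarrow> real" where
  "pop_loss P f w = (\<integral>z. f w z \<partial>P)"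

definition emp_loss :: "('a \<Rightarrow> 'z \<Rightarrow> real) \<Rightarrow> (nat \<Rightarrow> 'o \<Rightarrow> 'z) \<Rightarrow> nat set \<Rightarrow> 'a \<Rightarrow> 'o \<Rightarrow> real" where
  "emp_loss f X S w \<omega> = (\<Sum>i\<in>S. f w (X i \<omega>)) / real (card S)"

definition reg_risk :: "('a::real_normed_vector \<Rightarrow> 'z \<Rightarrow> real) \<Rightarrow> (nat \<Rightarrow> 'o \<Rightarrow> 'z) \<Rightarrow> real \<Rightarrow> real \<Rightarrow> real
    \<Rightarrow> nat set \<Rightarrow> 'a \<Rightarrow> 'o \<Rightarrow> real" where
  "reg_risk f X c \<gamma> \<alpha> S w \<omega> = emp_loss f X S w \<omega> + c * Vstat \<gamma> \<alpha> (card S) / 2 * (norm w)\<^sup>2"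

definition reg_grad :: "('a::real_normed_vector \<Rightarrow> 'z \<Rightarrow> 'a) \<Rightarrow> (nat \<Rightarrow> 'o \<Rightarrow> 'z) \<Rightarrow> real \<Rightarrow> real \<Rightarrow> real
    \<Rightarrow> nat set \<Rightarrow> 'a \<Rightarrow> 'o \<Rightarrow> 'a" where
  "reg_grad G X c \<gamma> \<alpha> S w \<omega> =
     (1 / real (card S)) *\<^sub>R (\<Sum>i\<in>S. G w (X i \<omega>)) + (c * Vstat \<gamma> \<alpha> (card S)) *\<^sub>R w"

fun agd :: "('a::real_vector \<Rightarrow> 'a) \<Rightarrow> real \<Rightarrow> real \<Rightarrow> 'a \<Rightarrow> nat \<Rightarrow> 'a \<times> 'a" where
  "agd g \<eta> \<beta> w0 0 = (w0, w0)"
| "agd g \<eta> \<beta> w0 (Suc k) =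
     (let (w, y) = agd g \<eta> \<beta> w0 k; w' = y - \<eta> *\<^sub>R g y in (w', w' + \<beta> *\<^sub>R (w' - w)))"

definition agd_eta :: "real \<Rightarrow> real \<Rightarrow> real \<Rightarrow> real \<Rightarrow> nat \<Rightarrow> real" where
  "agd_eta c \<gamma> \<alpha> M n = 1 / (c * Vstat \<gamma> \<alpha> n + M)"

definition agd_beta :: "real \<Rightarrow> real \<Rightarrow> real \<Rightarrow> real \<Rightarrow> nat \<Rightarrow> real" where
  "agd_beta c \<gamma> \<alpha> M n =
     (sqrt (c * Vstat \<gamma> \<alpha> n + M) - sqrt (c * Vstat \<gamma> \<alpha> n)) /
     (sqrt (c * Vstat \<gamma> \<alpha> n + M) + sqrt (c * Vstat \<gamma> \<alpha> n))"

definition log_factor :: "real \<Rightarrow> real \<Rightarrow> 'a::real_normed_vector \<Rightarrow> real" where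
  "log_factor \<alpha> c wstar = ln (6 * 2 powr \<alpha> + (2 powr \<alpha> - 1) * (4 + c * (norm wstar)\<^sup>2))"

definition iter_bound :: "real \<Rightarrow> real \<Rightarrow> real \<Rightarrow> real \<Rightarrow> 'a::real_normed_vector \<Rightarrow> nat \<Rightarrow> real" where
  "iter_bound \<alpha> c \<gamma> M wstar n =
     sqrt ((real n powr \<alpha> * M + c * \<gamma>) / (c * \<gamma>)) * log_factor \<alpha> c wstar"

end

theory Submission
  imports Defs
begin

text \<open>R_n is (cV_n + M)-smooth and cV_n-strongly convex, so Nesterov's Lyapunov function
  decays by the factor 1 - sqrt (cV_n / (cV_n + M)) per AGD step, and s_n steps reduce the initial gap
  R_n(w_m) - R_n(w_n*) by 2/F, where log F is the logarithmic factor of the bound. Writing the loss on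
  S_n as the mean of the losses on S_m and S_n - S_m, the initial gap is at most the gap of w_m on R_m
  plus uniform deviations |L - L_S| and a regularization term, whose expectations add up to F V_n / 2.
  Part (ii). Each stage costs n s_n \<le> n log F + n sqrt (n^\<alpha> M / (c \<gamma>)) log F; the first summand
  contributes N log F per stage, the second a geometric series with ratio 1 / sqrt (2^\<alpha>).\<close>

lemma gderiv_has_real_derivative_along_line:
  fixes h :: "'a::real_inner \<Rightarrow> real"
  assumes "\<And>w. GDERIV h w :> Gh w"
  shows "((\<lambda>t. h (y + t *\<^sub>R d)) has_real_derivative (d \<bullet> Gh (y + t *\<^sub>R d))) (at t)"
proof -
  have line: "((\<lambda>t. y + t *\<^sub>R d) has_derivative (\<lambda>s. s *\<^sub>R d)) (at t)"
    by (auto intro!: derivative_eq_intros)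
  have "(h has_derivative (\<lambda>v. v \<bullet> Gh (y + t *\<^sub>R d))) (at (y + t *\<^sub>R d))"
    using assms[of "y + t *\<^sub>R d"] by (simp add: gderiv_def)
  from has_derivative_compose[OF line this]
  have "((\<lambda>t. h (y + t *\<^sub>R d)) has_derivative (\<lambda>s. s * (d \<bullet> Gh (y + t *\<^sub>R d)))) (at t)"
    by (simp add: o_def)
  then show ?thesis
    by (simp add: has_field_derivative_def mult_commute_abs)
qed

lemma lipschitz_gderiv_quadratic_upper_bound:
  fixes h :: "'a::real_inner \<Rightarrow> real"
  assumes grad: "\<And>w. GDERIV h w :> Gh w"
    and lip: "\<And>w v. norm (Gh w - Gh v) \<le> M * norm (w - v)"
  shows "h u \<le> h y + Gh y \<bullet> (u - y) + M / 2 * (norm (u - y))\<^sup>2"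
proof -
  define d where "d = u - y"
  define \<psi> where "\<psi> t = h (y + t *\<^sub>R d) - t * (Gh y \<bullet> d) - M / 2 * t\<^sup>2 * (norm d)\<^sup>2" for t
  have \<psi>_deriv: "(\<psi> has_real_derivative (d \<bullet> Gh (y + t *\<^sub>R d) - Gh y \<bullet> d - M * t * (norm d)\<^sup>2)) (at t)"
    for t
    unfolding \<psi>_def
    by (auto intro!: derivative_eq_intros gderiv_has_real_derivative_along_line[OF grad]
        simp: power2_eq_square)
  have \<psi>_deriv_nonpos: "d \<bullet> Gh (y + t *\<^sub>R d) - Gh y \<bullet> d - M * t * (norm d)\<^sup>2 \<le> 0" if "0 \<le> t" for t
  proof -
    have "d \<bullet> Gh (y + t *\<^sub>R d) - Gh y \<bullet> d = d \<bullet> (Gh (y + t *\<^sub>R d) - Gh y)"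
      by (simp add: inner_diff_right inner_commute)
    also have "\<dots> \<le> norm d * norm (Gh (y + t *\<^sub>R d) - Gh y)"
      using norm_cauchy_schwarz by blast
    also have "\<dots> \<le> norm d * (M * norm (t *\<^sub>R d))"
      using lip[of "y + t *\<^sub>R d" y] by (intro mult_left_mono) auto
    also have "\<dots> = M * t * (norm d)\<^sup>2"
      using that by (simp add: power2_eq_square)
    finally show ?thesis by simp
  qed
  have "\<psi> 1 \<le> \<psi> 0"
  proof (rule DERIV_nonpos_imp_nonincreasing[of 0 1 \<psi>])
    fix t :: real assume "0 \<le> t" "t \<le> 1"
    then show "\<exists>D. DERIV \<psi> t :> D \<and> D \<le> 0" using \<psi>_deriv \<psi>_deriv_nonpos by blast
  qed simp
  then show ?thesis unfolding \<psi>_def d_def by (simp add: inner_commute)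
qed

lemma convex_gderiv_tangent_lower_bound:
  fixes h :: "'a::real_inner \<Rightarrow> real"
  assumes grad: "\<And>w. GDERIV h w :> Gh w"
    and cvx: "convex_on UNIV h"
  shows "h y + Gh y \<bullet> (u - y) \<le> h u"
proof -
  define d where "d = u - y"
  have line_convex: "convex_on UNIV (\<lambda>t::real. h (y + t *\<^sub>R d))"
  proof (rule convex_onI)
    fix a s t :: real
    assume a: "0 < a" "a < 1"
    have "y + ((1 - a) *\<^sub>R s + a *\<^sub>R t) *\<^sub>R d = (1 - a) *\<^sub>R (y + s *\<^sub>R d) + a *\<^sub>R (y + t *\<^sub>R d)"
      by (simp add: algebra_simps)
    then show "h (y + ((1 - a) *\<^sub>R s + a *\<^sub>R t) *\<^sub>R d) \<le> (1 - a) * h (y + s *\<^sub>R d) + a * h (y + t *\<^sub>R d)"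
      using convex_onD[OF cvx, of a "y + s *\<^sub>R d" "y + t *\<^sub>R d"] a by auto
  qed simp
  have "((\<lambda>t. h (y + t *\<^sub>R d)) has_real_derivative (d \<bullet> Gh y)) (at 0)"
    using gderiv_has_real_derivative_along_line[OF grad, of y d 0] by simp
  then have "(\<lambda>t. h (y + t *\<^sub>R d)) 1 - (\<lambda>t. h (y + t *\<^sub>R d)) 0 \<ge> (d \<bullet> Gh y) * (1 - 0)"
    by (intro convex_on_imp_above_tangent[OF line_convex]) (auto intro: has_field_derivative_at_within)
  then show ?thesis unfolding d_def by (simp add: inner_commute)
qed

lemma gradient_step_descent:
  fixes R :: "'a::real_inner \<Rightarrow> real" and g :: "'a \<Rightarrow> 'a"
  assumes L: "0 < L"
    and upper: "\<And>u y. R u \<le> R y + g y \<bullet> (u - y) + L / 2 * (norm (u - y))\<^sup>2"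
  shows "R (y - (1 / L) *\<^sub>R g y) \<le> R y - (norm (g y))\<^sup>2 / (2 * L)"
proof -
  have "R (y - (1 / L) *\<^sub>R g y)
      \<le> R y + g y \<bullet> (y - (1 / L) *\<^sub>R g y - y) + L / 2 * (norm (y - (1 / L) *\<^sub>R g y - y))\<^sup>2"
    by (rule upper)
  also have "\<dots> = R y - (norm (g y))\<^sup>2 / (2 * L)"
    using L by (simp add: field_simps power2_eq_square dot_square_norm)
  finally show ?thesis .
qed

lemma smooth_strongly_convex_minimizer:
  fixes R :: "'a::real_inner \<Rightarrow> real" and g :: "'a \<Rightarrow> 'a"
  assumes L: "0 < L"
    and upper: "\<And>u y. R u \<le> R y + g y \<bullet> (u - y) + L / 2 * (norm (u - y))\<^sup>2"
    and lower: "\<And>u y. R y + g y \<bullet> (u - y) + \<mu> / 2 * (norm (u - y))\<^sup>2 \<le> R u"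
    and min: "\<And>u. R xs \<le> R u"
  shows "g xs = 0" "R u \<le> R xs + L / 2 * (norm (u - xs))\<^sup>2"
    "R xs + \<mu> / 2 * (norm (u - xs))\<^sup>2 \<le> R u"
proof -
  have "(norm (g xs))\<^sup>2 / (2 * L) \<le> 0"
    using gradient_step_descent[OF L upper, of xs] min[of "xs - (1 / L) *\<^sub>R g xs"] by linarith
  then show g0: "g xs = 0"
    using L by (simp add: divide_le_0_iff)
  show "R u \<le> R xs + L / 2 * (norm (u - xs))\<^sup>2" using upper[of u xs] g0 by simp
  show "R xs + \<mu> / 2 * (norm (u - xs))\<^sup>2 \<le> R u" using lower[of xs u] g0 by simp
qed

lemma fst_agd_Suc:
  "fst (agd g \<eta> \<beta> w0 (Suc k)) = snd (agd g \<eta> \<beta> w0 k) - \<eta> *\<^sub>R g (snd (agd g \<eta> \<beta> w0 k))"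
  by (simp add: Let_def split: prod.split)

lemma snd_agd_Suc:
  "snd (agd g \<eta> \<beta> w0 (Suc k))
     = fst (agd g \<eta> \<beta> w0 (Suc k)) + \<beta> *\<^sub>R (fst (agd g \<eta> \<beta> w0 (Suc k)) - fst (agd g \<eta> \<beta> w0 k))"
  by (simp add: Let_def split: prod.split)

text \<open>Nesterov's Lyapunov function for the iterate pair (w, y), built from the auxiliary point
  z = ((1 + t) y - w) / t; here t = sqrt (\<mu> / L) for a \<mu>-strongly convex, L-smooth R.\<close>
definition agd_potential :: "('a::real_inner \<Rightarrow> real) \<Rightarrow> real \<Rightarrow> real \<Rightarrow> 'a \<Rightarrow> 'a \<times> 'a \<Rightarrow> real" where
  "agd_potential R L t xs p =
     R (fst p) - R xs + t\<^sup>2 * L / 2 * (norm ((1 / t) *\<^sub>R ((1 + t) *\<^sub>R snd p - fst p) - xs))\<^sup>2"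

lemma agd_auxiliary_point_step:
  fixes x y gy :: "'a::real_vector"
  assumes t: "0 < t" and L: "0 < L"
    and x1: "x1 = y - (1 / L) *\<^sub>R gy"
    and y1: "y1 = x1 + ((1 - t) / (1 + t)) *\<^sub>R (x1 - x)"
  shows "(1 / t) *\<^sub>R ((1 + t) *\<^sub>R y1 - x1)
       = (1 - t) *\<^sub>R ((1 / t) *\<^sub>R ((1 + t) *\<^sub>R y - x)) + t *\<^sub>R y - (1 / (t * L)) *\<^sub>R gy"
proof -
  have \<beta>: "(1 + t) * ((1 - t) / (1 + t)) = 1 - t" using t by simp
  have "(1 + t) *\<^sub>R y1 - x1 = t *\<^sub>R x1 + ((1 + t) * ((1 - t) / (1 + t))) *\<^sub>R (x1 - x)"
    unfolding y1 by (simp add: algebra_simps)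
  also have "\<dots> = x1 - (1 - t) *\<^sub>R x"
    unfolding \<beta> by (simp add: algebra_simps)
  finally have "t *\<^sub>R ((1 / t) *\<^sub>R ((1 + t) *\<^sub>R y1 - x1)) = y - (1 / L) *\<^sub>R gy - (1 - t) *\<^sub>R x"
    using t unfolding x1 by simp
  also have "\<dots> = (1 - t) *\<^sub>R ((1 + t) *\<^sub>R y - x) + (t * t) *\<^sub>R y - (1 / L) *\<^sub>R gy"
    by (simp add: algebra_simps)
  also have "\<dots> = t *\<^sub>R ((1 - t) *\<^sub>R ((1 / t) *\<^sub>R ((1 + t) *\<^sub>R y - x)) + t *\<^sub>R y - (1 / (t * L)) *\<^sub>R gy)"
    using t by (simp add: scaleR_right_distrib scaleR_right_diff_distrib)
  finally show ?thesis using t by simp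
qed

lemma power2_norm_linear_combination:
  fixes a b g :: "'a::real_inner"
  shows "(norm (p *\<^sub>R a + q *\<^sub>R b - r *\<^sub>R g))\<^sup>2
      = p\<^sup>2 * (a \<bullet> a) + q\<^sup>2 * (b \<bullet> b) + r\<^sup>2 * (g \<bullet> g) + 2 * p * q * (a \<bullet> b)
        - 2 * p * r * (a \<bullet> g) - 2 * q * r * (b \<bullet> g)"
  unfolding power2_norm_eq_inner
  by (simp add: inner_add_left inner_add_right inner_diff_left inner_diff_right
      inner_commute algebra_simps power2_eq_square)

text \<open>The scalar core of the AGD step: aa, bb, ab stand for the inner products of a = z - xs and
  b = y - xs, and gg, ag, bg for those with the gradient at y. The claim is the descent inequality
  plus t times strong convexity at xs plus 1 - t times strong convexity at x.\<close>
lemma agd_potential_step_scalar: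
  fixes t L Rx1 Ry Rs Rx aa bb gg ab ag bg :: real
  assumes t: "0 < t" "t \<le> 1" and L: "0 < L"
    and descent: "Rx1 \<le> Ry - gg / (2 * L)"
    and lower_xs: "Ry - bg + t\<^sup>2 * L / 2 * bb \<le> Rs"
    and lower_x: "Ry + t * (bg - ag) \<le> Rx"
    and cauchy: "0 \<le> aa - 2 * ab + bb"
  shows "Rx1 - Rs + t\<^sup>2 * L / 2 * ((1 - t)\<^sup>2 * aa + t\<^sup>2 * bb + 2 * (1 - t) * t * ab)
           + gg / (2 * L) - (1 - t) * t * ag - t\<^sup>2 * bg
         \<le> (1 - t) * (Rx - Rs + t\<^sup>2 * L / 2 * aa)"
proof -
  have "Rx1 - Rs + t\<^sup>2 * L / 2 * ((1 - t)\<^sup>2 * aa + t\<^sup>2 * bb + 2 * (1 - t) * t * ab)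
           + gg / (2 * L) - (1 - t) * t * ag - t\<^sup>2 * bg - (1 - t) * (Rx - Rs + t\<^sup>2 * L / 2 * aa)
        = (Rx1 - Ry + gg / (2 * L)) + t * (Ry - bg + t\<^sup>2 * L / 2 * bb - Rs)
          + (1 - t) * (Ry + t * (bg - ag) - Rx) - t\<^sup>2 * L / 2 * t * (1 - t) * (aa - 2 * ab + bb)"
    by (simp add: field_simps power2_eq_square)
  moreover have "t * (Ry - bg + t\<^sup>2 * L / 2 * bb - Rs) \<le> 0"
    using lower_xs t by (intro mult_nonneg_nonpos) auto
  moreover have "(1 - t) * (Ry + t * (bg - ag) - Rx) \<le> 0"
    using lower_x t by (intro mult_nonneg_nonpos) auto
  moreover have "0 \<le> t\<^sup>2 * L / 2 * t * (1 - t) * (aa - 2 * ab + bb)"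
    using t L cauchy by (intro mult_nonneg_nonneg) auto
  ultimately show ?thesis using descent by linarith
qed

lemma agd_potential_step:
  fixes R :: "'a::real_inner \<Rightarrow> real" and g :: "'a \<Rightarrow> 'a"
  assumes t: "0 < t" "t \<le> 1" and L: "0 < L"
    and upper: "\<And>u y. R u \<le> R y + g y \<bullet> (u - y) + L / 2 * (norm (u - y))\<^sup>2"
    and lower: "\<And>u y. R y + g y \<bullet> (u - y) + t\<^sup>2 * L / 2 * (norm (u - y))\<^sup>2 \<le> R u"
    and x1: "x1 = y - (1 / L) *\<^sub>R g y"
    and y1: "y1 = x1 + ((1 - t) / (1 + t)) *\<^sub>R (x1 - x)"
  shows "agd_potential R L t xs (x1, y1) \<le> (1 - t) * agd_potential R L t xs (x, y)"
proof -
  define z where "z = (1 / t) *\<^sub>R ((1 + t) *\<^sub>R y - x)"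
  define a where "a = z - xs"
  define b where "b = y - xs"
  define gy where "gy = g y"
  have z1: "(1 / t) *\<^sub>R ((1 + t) *\<^sub>R y1 - x1) - xs = (1 - t) *\<^sub>R a + t *\<^sub>R b - (1 / (t * L)) *\<^sub>R gy"
    using agd_auxiliary_point_step[OF t(1) L x1 y1] unfolding a_def b_def z_def gy_def
    by (simp add: algebra_simps)
  have xy: "x - y = t *\<^sub>R (b - a)"
    unfolding a_def b_def z_def using t by (simp add: algebra_simps)
  have descent: "R x1 \<le> R y - (gy \<bullet> gy) / (2 * L)"
    using gradient_step_descent[OF L upper, of y] unfolding x1 gy_def by (simp add: dot_square_norm)
  have lower_xs: "R y - b \<bullet> gy + t\<^sup>2 * L / 2 * (b \<bullet> b) \<le> R xs"
    using lower[of y xs] unfolding gy_def b_def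
    by (simp add: power2_norm_eq_inner inner_diff_right inner_commute algebra_simps)
  have lower_x: "R y + t * (b \<bullet> gy - a \<bullet> gy) \<le> R x"
  proof -
    have "R y + gy \<bullet> (x - y) + t\<^sup>2 * L / 2 * (norm (x - y))\<^sup>2 \<le> R x"
      using lower unfolding gy_def by blast
    moreover have "0 \<le> t\<^sup>2 * L / 2 * (norm (x - y))\<^sup>2" using L by simp
    ultimately show ?thesis unfolding xy by (simp add: inner_diff_right inner_commute)
  qed
  have cauchy: "0 \<le> a \<bullet> a - 2 * (a \<bullet> b) + b \<bullet> b"
    using inner_ge_zero[of "a - b"] by (simp add: inner_diff_left inner_diff_right inner_commute)
  have expand_new: "t\<^sup>2 * L / 2 * (norm ((1 - t) *\<^sub>R a + t *\<^sub>R b - (1 / (t * L)) *\<^sub>R gy))\<^sup>2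
     = t\<^sup>2 * L / 2 * ((1 - t)\<^sup>2 * (a \<bullet> a) + t\<^sup>2 * (b \<bullet> b) + 2 * (1 - t) * t * (a \<bullet> b))
           + (gy \<bullet> gy) / (2 * L) - (1 - t) * t * (a \<bullet> gy) - t\<^sup>2 * (b \<bullet> gy)"
    unfolding power2_norm_linear_combination using t L by (simp add: field_simps power2_eq_square)
  have expand_old: "(norm (z - xs))\<^sup>2 = a \<bullet> a"
    unfolding a_def by (simp add: power2_norm_eq_inner)
  show ?thesis
    unfolding agd_potential_def fst_conv snd_conv z1 z_def[symmetric] expand_new expand_old
    using agd_potential_step_scalar[OF t L descent lower_xs lower_x cauchy] by linarith
qed

lemma agd_potential_decay:
  fixes R :: "'a::real_inner \<Rightarrow> real" and g :: "'a \<Rightarrow> 'a"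
  assumes t: "0 < t" "t \<le> 1" and L: "0 < L"
    and upper: "\<And>u y. R u \<le> R y + g y \<bullet> (u - y) + L / 2 * (norm (u - y))\<^sup>2"
    and lower: "\<And>u y. R y + g y \<bullet> (u - y) + t\<^sup>2 * L / 2 * (norm (u - y))\<^sup>2 \<le> R u"
  shows "agd_potential R L t xs (agd g (1 / L) ((1 - t) / (1 + t)) x0 k)
         \<le> (1 - t) ^ k * agd_potential R L t xs (x0, x0)"
proof (induction k)
  case (Suc k)
  define p where "p = agd g (1 / L) ((1 - t) / (1 + t)) x0"
  have "p (Suc k) = (fst (p (Suc k)), snd (p (Suc k)))" "p k = (fst (p k), snd (p k))"
    by simp_all
  moreover have "agd_potential R L t xs (fst (p (Suc k)), snd (p (Suc k)))
      \<le> (1 - t) * agd_potential R L t xs (fst (p k), snd (p k))"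
    unfolding p_def
    by (intro agd_potential_step[OF t L upper lower]) (simp_all only: fst_agd_Suc snd_agd_Suc)
  ultimately have "agd_potential R L t xs (p (Suc k)) \<le> (1 - t) * agd_potential R L t xs (p k)"
    by metis
  also have "\<dots> \<le> (1 - t) * ((1 - t) ^ k * agd_potential R L t xs (x0, x0))"
    using Suc t unfolding p_def by (intro mult_left_mono) auto
  finally show ?case unfolding p_def by simp
qed simp

lemma agd_convergence:
  fixes R :: "'a::real_inner \<Rightarrow> real" and g :: "'a \<Rightarrow> 'a"
  assumes \<mu>: "0 < \<mu>" "\<mu> \<le> L"
    and upper: "\<And>u y. R u \<le> R y + g y \<bullet> (u - y) + L / 2 * (norm (u - y))\<^sup>2"
    and lower: "\<And>u y. R y + g y \<bullet> (u - y) + \<mu> / 2 * (norm (u - y))\<^sup>2 \<le> R u"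
    and min: "\<And>u. R xs \<le> R u"
  shows "R (fst (agd g (1 / L) ((sqrt L - sqrt \<mu>) / (sqrt L + sqrt \<mu>)) x0 k)) - R xs
         \<le> 2 * (1 - sqrt \<mu> / sqrt L) ^ k * (R x0 - R xs)"
proof -
  define t where "t = sqrt \<mu> / sqrt L"
  have L: "0 < L" using \<mu> by simp
  have t: "0 < t" "t \<le> 1" unfolding t_def using \<mu> L by (auto simp: real_sqrt_le_iff)
  have tL: "t\<^sup>2 * L = \<mu>" unfolding t_def using \<mu> L by (simp add: power_divide)
  have "sqrt L - sqrt \<mu> = (1 - t) * sqrt L" "sqrt L + sqrt \<mu> = (1 + t) * sqrt L"
    unfolding t_def using L by (simp_all add: algebra_simps)
  then have \<beta>: "(sqrt L - sqrt \<mu>) / (sqrt L + sqrt \<mu>) = (1 - t) / (1 + t)"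
    using L by simp
  have "(1 / t) *\<^sub>R ((1 + t) *\<^sub>R x0 - x0) = x0" using t by (simp add: algebra_simps)
  then have "agd_potential R L t xs (x0, x0) = R x0 - R xs + \<mu> / 2 * (norm (x0 - xs))\<^sup>2"
    unfolding agd_potential_def tL by simp
  also have "\<dots> \<le> 2 * (R x0 - R xs)"
    using smooth_strongly_convex_minimizer(3)[OF L upper lower min, of x0] by simp
  finally have initial: "agd_potential R L t xs (x0, x0) \<le> 2 * (R x0 - R xs)" .
  have "R (fst (agd g (1 / L) ((1 - t) / (1 + t)) x0 k)) - R xs
      \<le> agd_potential R L t xs (agd g (1 / L) ((1 - t) / (1 + t)) x0 k)"
    unfolding agd_potential_def using L by simp
  also have "\<dots> \<le> (1 - t) ^ k * agd_potential R L t xs (x0, x0)"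
    using lower tL by (intro agd_potential_decay[OF t L upper]) simp
  also have "\<dots> \<le> (1 - t) ^ k * (2 * (R x0 - R xs))"
    using initial t by (intro mult_left_mono) auto
  finally show ?thesis unfolding \<beta> t_def by (simp add: algebra_simps)
qed

lemma one_minus_power_le_inverse:
  fixes t F :: real
  assumes t: "0 < t" "t \<le> 1" and F: "0 < F" and n: "ln F / t \<le> real n"
  shows "(1 - t) ^ n \<le> 1 / F"
proof -
  have "(1 - t) ^ n \<le> exp (- t) ^ n"
    using t by (intro power_mono) (auto simp: exp_ge_add_one_self[of "-t", simplified])
  also have "\<dots> = exp (- (t * real n))" by (simp add: exp_of_nat_mult[symmetric] mult.commute)
  also have "\<dots> \<le> exp (- ln F)" using n t by (simp add: field_simps)
  also have "\<dots> = 1 / F" using F by (simp add: exp_minus inverse_eq_divide)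
  finally show ?thesis .
qed

lemma dense_sequence_exists:
  obtains d :: "nat \<Rightarrow> 'a::{metric_space, second_countable_topology}"
  where "\<And>x e. 0 < e \<Longrightarrow> \<exists>j. dist (d j) x < e"
proof -
  obtain D :: "'a set" where D: "countable D" "\<And>U. open U \<Longrightarrow> U \<noteq> {} \<Longrightarrow> \<exists>y\<in>D. y \<in> U"
    using countable_dense_exists by blast
  have "D \<noteq> {}" using D(2)[of UNIV] by auto
  then have range: "range (from_nat_into D) = D" using D(1) by simp
  show ?thesis
  proof
    fix x :: 'a and e :: real assume "0 < e"
    then obtain y where "y \<in> D" "y \<in> ball x e" using D(2)[of "ball x e"] by auto
    then show "\<exists>j. dist (from_nat_into D j) x < e"
      using range by (metis dist_commute imageE mem_ball)
  qed
qed

lemma dense_least_near_minimizer: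
  fixes R :: "'a::real_normed_vector \<Rightarrow> real" and d :: "nat \<Rightarrow> 'a"
  assumes dense: "\<And>x e. 0 < e \<Longrightarrow> \<exists>j. dist (d j) x < e"
    and L: "0 < L" and \<mu>: "0 < \<mu>" and \<epsilon>: "0 < \<epsilon>"
    and upper: "\<And>u. R u \<le> R xs + L / 2 * (norm (u - xs))\<^sup>2"
    and lower: "\<And>u. R xs + \<mu> / 2 * (norm (u - xs))\<^sup>2 \<le> R u"
  shows "(norm (d (LEAST j. \<forall>i. R (d j) \<le> R (d i) + \<epsilon>) - xs))\<^sup>2 \<le> 4 * \<epsilon> / \<mu>"
proof -
  define j where "j = (LEAST j. \<forall>i. R (d j) \<le> R (d i) + \<epsilon>)"
  obtain j0 where j0: "dist (d j0) xs < sqrt (2 * \<epsilon> / L)"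
    using dense[of "sqrt (2 * \<epsilon> / L)"] L \<epsilon> by auto
  have "(norm (d j0 - xs))\<^sup>2 \<le> (sqrt (2 * \<epsilon> / L))\<^sup>2"
    using j0 by (intro power_mono) (auto simp: dist_norm)
  also have "\<dots> = 2 * \<epsilon> / L" using L \<epsilon> by simp
  finally have "L / 2 * (norm (d j0 - xs))\<^sup>2 \<le> L / 2 * (2 * \<epsilon> / L)"
    using L by (intro mult_left_mono) auto
  then have "L / 2 * (norm (d j0 - xs))\<^sup>2 \<le> \<epsilon>" using L by simp
  then have near_j0: "R (d j0) \<le> R xs + \<epsilon>"
    using upper[of "d j0"] by linarith
  have xs_min: "R xs \<le> R u" for u
  proof -
    have "0 \<le> \<mu> / 2 * (norm (u - xs))\<^sup>2" using \<mu> by simp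
    then show ?thesis using lower[of u] by linarith
  qed
  have "R (d j0) \<le> R (d i) + \<epsilon>" for i
    using near_j0 xs_min[of "d i"] by linarith
  then have "\<forall>i. R (d j) \<le> R (d i) + \<epsilon>"
    unfolding j_def by (intro LeastI[where P = "\<lambda>j. \<forall>i. R (d j) \<le> R (d i) + \<epsilon>"]) blast
  from spec[OF this, of j0] have "R (d j) \<le> R xs + 2 * \<epsilon>"
    using near_j0 by linarith
  then have "\<mu> * (norm (d j - xs))\<^sup>2 \<le> 4 * \<epsilon>"
    using lower[of "d j"] by linarith
  then show ?thesis
    unfolding j_def[symmetric] using \<mu> by (simp add: pos_le_divide_eq mult.commute)
qed

text \<open>The minimizer is the pointwise limit of the measurable selections "first point of a countable
  dense set that is within (k+1)^-2 of the infimum over that set".\<close>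
lemma borel_measurable_minimizer:
  fixes Rw :: "'a::{real_normed_vector, second_countable_topology} \<Rightarrow> 'o \<Rightarrow> real"
    and xs :: "'o \<Rightarrow> 'a"
  assumes [measurable]: "\<And>w. (\<lambda>\<omega>. Rw w \<omega>) \<in> borel_measurable Q"
    and L: "0 < L" and \<mu>: "0 < \<mu>"
    and upper: "\<And>\<omega> u. \<omega> \<in> space Q \<Longrightarrow> Rw u \<omega> \<le> Rw (xs \<omega>) \<omega> + L / 2 * (norm (u - xs \<omega>))\<^sup>2"
    and lower: "\<And>\<omega> u. \<omega> \<in> space Q \<Longrightarrow> Rw (xs \<omega>) \<omega> + \<mu> / 2 * (norm (u - xs \<omega>))\<^sup>2 \<le> Rw u \<omega>"
  shows "xs \<in> borel_measurable Q"
proof -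
  obtain d :: "nat \<Rightarrow> 'a" where dense: "\<And>x e. 0 < e \<Longrightarrow> \<exists>j. dist (d j) x < e"
    using dense_sequence_exists by blast
  define \<epsilon> where "\<epsilon> k = (inverse (real (Suc k)))\<^sup>2" for k
  have \<epsilon>: "0 < \<epsilon> k" for k unfolding \<epsilon>_def by simp
  define sel where "sel k \<omega> = d (LEAST j. \<forall>i. Rw (d j) \<omega> \<le> Rw (d i) \<omega> + \<epsilon> k)" for k \<omega>
  have "Measurable.pred Q (\<lambda>\<omega>. \<forall>i. Rw (d j) \<omega> \<le> Rw (d i) \<omega> + \<epsilon> k)" for j k
    by measurable
  then have least_measurable:
    "(\<lambda>\<omega>. LEAST j. \<forall>i. Rw (d j) \<omega> \<le> Rw (d i) \<omega> + \<epsilon> k) \<in> measurable Q (count_space UNIV)" for k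
    by (intro measurable_Least) auto
  have sel_measurable: "sel k \<in> borel_measurable Q" for k
    unfolding sel_def by (rule measurable_compose[OF least_measurable]) simp
  have sel_close: "norm (sel k \<omega> - xs \<omega>) \<le> 2 / sqrt \<mu> * inverse (real (Suc k))"
    if \<omega>: "\<omega> \<in> space Q" for \<omega> k
  proof -
    have "(norm (sel k \<omega> - xs \<omega>))\<^sup>2 \<le> 4 * \<epsilon> k / \<mu>"
      unfolding sel_def by (rule dense_least_near_minimizer[OF dense L \<mu> \<epsilon> upper[OF \<omega>] lower[OF \<omega>]])
    also have "\<dots> = (2 / sqrt \<mu> * inverse (real (Suc k)))\<^sup>2"
      unfolding \<epsilon>_def using \<mu> by (simp add: power_mult_distrib power_divide)
    finally show ?thesis by (rule power2_le_imp_le) (use \<mu> in simp)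
  qed
  have "(\<lambda>k. sel k \<omega>) \<longlonglongrightarrow> xs \<omega>" if "\<omega> \<in> space Q" for \<omega>
  proof -
    have "(\<lambda>k. sel k \<omega> - xs \<omega>) \<longlonglongrightarrow> 0"
    proof (rule Lim_null_comparison)
      show "\<forall>\<^sub>F k in sequentially. norm (sel k \<omega> - xs \<omega>) \<le> 2 / sqrt \<mu> * inverse (real (Suc k))"
        using sel_close[OF that] by simp
      show "(\<lambda>k. 2 / sqrt \<mu> * inverse (real (Suc k))) \<longlonglongrightarrow> 0"
        by (rule tendsto_mult_right_zero[OF LIMSEQ_inverse_real_of_nat])
    qed
    then show ?thesis by (simp add: LIM_zero_iff)
  qed
  then show ?thesis by (rule borel_measurable_LIMSEQ_metric[OF sel_measurable])
qed

lemma integrable_integral_le_of_nn_integral_le: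
  fixes p :: "'a \<Rightarrow> real"
  assumes p: "p \<in> borel_measurable Q" "\<forall>\<omega>\<in>space Q. 0 \<le> p \<omega>"
    and bound: "(\<integral>\<^sup>+\<omega>. ennreal (p \<omega>) \<partial>Q) \<le> ennreal V" and V: "0 \<le> V"
  shows "integrable Q p \<and> integral\<^sup>L Q p \<le> V"
proof -
  have ae: "AE \<omega> in Q. 0 \<le> p \<omega>" using p(2) by auto
  have "(\<integral>\<^sup>+\<omega>. ennreal (p \<omega>) \<partial>Q) < \<infinity>" using bound by (simp add: le_less_trans)
  then have int: "integrable Q p" by (rule integrableI_nonneg[OF p(1) ae])
  then have "ennreal (integral\<^sup>L Q p) \<le> ennreal V" using nn_integral_eq_integral[OF int ae] bound by simp
  then show ?thesis using int V by (simp add: ennreal_le_iff)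
qed

lemma integrable_integral_le_of_dominated:
  fixes p h :: "'a \<Rightarrow> real"
  assumes h: "integrable Q h \<and> integral\<^sup>L Q h \<le> b" and p: "p \<in> borel_measurable Q"
    and nonneg: "\<And>\<omega>. \<omega> \<in> space Q \<Longrightarrow> 0 \<le> p \<omega>"
    and dominated: "\<And>\<omega>. \<omega> \<in> space Q \<Longrightarrow> p \<omega> \<le> h \<omega>"
  shows "integrable Q p \<and> integral\<^sup>L Q p \<le> b"
proof -
  have int: "integrable Q p"
    using h nonneg dominated by (intro Bochner_Integration.integrable_bound[OF _ p] AE_I2) force+
  have "integral\<^sup>L Q p \<le> integral\<^sup>L Q h"
    using h dominated by (intro integral_mono[OF int]) auto
  then show ?thesis using int h by simp
qed

lemma integrable_integral_le_add:
  fixes p1 p2 :: "'a \<Rightarrow> real"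
  assumes "integrable Q p1 \<and> integral\<^sup>L Q p1 \<le> b1" "integrable Q p2 \<and> integral\<^sup>L Q p2 \<le> b2"
  shows "integrable Q (\<lambda>\<omega>. p1 \<omega> + p2 \<omega>) \<and> integral\<^sup>L Q (\<lambda>\<omega>. p1 \<omega> + p2 \<omega>) \<le> b1 + b2"
  using assms by auto

lemma integrable_integral_le_cmult:
  fixes p :: "'a \<Rightarrow> real"
  assumes "integrable Q p \<and> integral\<^sup>L Q p \<le> b" "0 \<le> k"
  shows "integrable Q (\<lambda>\<omega>. k * p \<omega>) \<and> integral\<^sup>L Q (\<lambda>\<omega>. k * p \<omega>) \<le> k * b"
  using assms by (simp add: mult_left_mono)

lemma (in prob_space) integrable_integral_le_const:
  "integrable M (\<lambda>\<omega>. K::real) \<and> integral\<^sup>L M (\<lambda>\<omega>. K) \<le> K"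
  by (simp add: prob_space)

definition gap_factor :: "real \<Rightarrow> real \<Rightarrow> 'a::real_normed_vector \<Rightarrow> real" where
  "gap_factor \<alpha> c wstar = 6 * 2 powr \<alpha> + (2 powr \<alpha> - 1) * (4 + c * (norm wstar)\<^sup>2)"

lemma log_factor_eq_ln_gap_factor: "log_factor \<alpha> c wstar = ln (gap_factor \<alpha> c wstar)"
  unfolding log_factor_def gap_factor_def ..

lemma gap_factor_ge_6:
  assumes "0 \<le> \<alpha>" "0 \<le> c"
  shows "6 \<le> gap_factor \<alpha> c wstar"
proof -
  have "1 \<le> 2 powr \<alpha>" using assms by (intro ge_one_powr_ge_zero) auto
  moreover from this have "0 \<le> (2 powr \<alpha> - 1) * (4 + c * (norm wstar)\<^sup>2)"
    using assms by (intro mult_nonneg_nonneg) auto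
  ultimately show ?thesis unfolding gap_factor_def by linarith
qed

lemma log_factor_nonneg:
  assumes "0 \<le> \<alpha>" "0 \<le> c"
  shows "0 \<le> log_factor \<alpha> c wstar"
  using gap_factor_ge_6[OF assms, of wstar] unfolding log_factor_eq_ln_gap_factor by simp

lemma Vstat_double:
  assumes "0 < k"
  shows "Vstat \<gamma> \<alpha> k = 2 powr \<alpha> * Vstat \<gamma> \<alpha> (2 * k)"
  unfolding Vstat_def using assms by (simp add: powr_mult field_simps)

lemma card_Diff_half:
  assumes "finite B" "A \<subseteq> B" "card B = 2 * card A"
  shows "card (B - A) = card A"
  using card_Diff_subset[OF finite_subset[OF assms(2,1)] assms(2)] assms(3) by simp

locale regularized_erm =
  fixes Q :: "'o measure" and P :: "'z measure" and X :: "nat \<Rightarrow> 'o \<Rightarrow> 'z" and N :: nat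
    and f :: "'a::euclidean_space \<Rightarrow> 'z \<Rightarrow> real" and G :: "'a \<Rightarrow> 'z \<Rightarrow> 'a"
    and M c \<gamma> \<alpha> :: real and wstar :: 'a
  assumes Q: "prob_space Q" and P: "prob_space P"
    and X_meas: "\<forall>i<N. X i \<in> measurable Q P"
    and f_meas: "(\<lambda>(w, z). f w z) \<in> borel_measurable (borel \<Otimes>\<^sub>M P)"
    and f_convex: "\<forall>z\<in>space P. convex_on UNIV (\<lambda>w. f w z)"
    and f_grad: "\<forall>z\<in>space P. \<forall>w. GDERIV (\<lambda>v. f v z) w :> G w z"
    and M_pos: "0 < M"
    and G_lip: "\<forall>z\<in>space P. \<forall>w v. norm (G w z - G v z) \<le> M * norm (w - v)"
    and \<gamma>_pos: "0 < \<gamma>" and \<alpha>_nonneg: "0 \<le> \<alpha>" and c_pos: "0 < c"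
    and stat_acc: "\<forall>S. S \<subseteq> {..<N} \<and> S \<noteq> {} \<longrightarrow>
        (\<integral>\<^sup>+\<omega>. (SUP w. ennreal \<bar>pop_loss P f w - emp_loss f X S w \<omega>\<bar>) \<partial>Q)
          \<le> ennreal (Vstat \<gamma> \<alpha> (card S))"
    and wstar_min: "\<forall>w. pop_loss P f wstar \<le> pop_loss P f w"
begin

definition loss_deviation :: "nat set \<Rightarrow> 'a \<Rightarrow> 'o \<Rightarrow> real" where
  "loss_deviation S w \<omega> = \<bar>pop_loss P f w - emp_loss f X S w \<omega>\<bar>"

lemma Vstat_nonneg: "0 \<le> Vstat \<gamma> \<alpha> k"
  unfolding Vstat_def using \<gamma>_pos by simp

lemma regularization_weight_pos:
  assumes "finite S" "S \<noteq> {}"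
  shows "0 < c * Vstat \<gamma> \<alpha> (card S)"
  using assms c_pos \<gamma>_pos unfolding Vstat_def by (simp add: card_gt_0_iff)

lemma reg_risk_quadratic_bounds:
  assumes S: "S \<subseteq> {..<N}" "S \<noteq> {}" and \<omega>: "\<omega> \<in> space Q"
  shows "reg_risk f X c \<gamma> \<alpha> S u \<omega> \<le> reg_risk f X c \<gamma> \<alpha> S y \<omega> + reg_grad G X c \<gamma> \<alpha> S y \<omega> \<bullet> (u - y)
           + (c * Vstat \<gamma> \<alpha> (card S) + M) / 2 * (norm (u - y))\<^sup>2"
    and "reg_risk f X c \<gamma> \<alpha> S y \<omega> + reg_grad G X c \<gamma> \<alpha> S y \<omega> \<bullet> (u - y)
           + c * Vstat \<gamma> \<alpha> (card S) / 2 * (norm (u - y))\<^sup>2 \<le> reg_risk f X c \<gamma> \<alpha> S u \<omega>"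
proof -
  have fin: "finite S" using S(1) finite_subset by blast
  define n where "n = real (card S)"
  have n: "0 < n" unfolding n_def using fin S(2) by (simp add: card_gt_0_iff)
  define \<mu> where "\<mu> = c * Vstat \<gamma> \<alpha> (card S)"
  have sample: "X i \<omega> \<in> space P" if "i \<in> S" for i
    using measurable_space[of "X i" Q P \<omega>] X_meas that S(1) \<omega> by auto
  have risk: "reg_risk f X c \<gamma> \<alpha> S w \<omega> = (\<Sum>i\<in>S. f w (X i \<omega>)) / n + \<mu> / 2 * (norm w)\<^sup>2" for w
    unfolding reg_risk_def emp_loss_def n_def \<mu>_def by simp
  have grad: "reg_grad G X c \<gamma> \<alpha> S y \<omega> \<bullet> (u - y)
      = (\<Sum>i\<in>S. G y (X i \<omega>) \<bullet> (u - y)) / n + \<mu> * (y \<bullet> (u - y))"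
    unfolding reg_grad_def n_def \<mu>_def by (simp add: inner_add_left inner_sum_left)
  have quad: "(norm u)\<^sup>2 = (norm y)\<^sup>2 + 2 * (y \<bullet> (u - y)) + (norm (u - y))\<^sup>2"
    unfolding power2_norm_eq_inner by (simp add: inner_diff_left inner_diff_right inner_commute)
  have "(\<Sum>i\<in>S. f u (X i \<omega>))
      \<le> (\<Sum>i\<in>S. f y (X i \<omega>) + G y (X i \<omega>) \<bullet> (u - y) + M / 2 * (norm (u - y))\<^sup>2)"
    using sample f_grad G_lip
    by (intro sum_mono lipschitz_gderiv_quadratic_upper_bound[of "\<lambda>v. f v (X _ \<omega>)"]) auto
  from divide_right_mono[OF this, of n] have upper: "(\<Sum>i\<in>S. f u (X i \<omega>)) / n
      \<le> (\<Sum>i\<in>S. f y (X i \<omega>)) / n + (\<Sum>i\<in>S. G y (X i \<omega>) \<bullet> (u - y)) / n + M / 2 * (norm (u - y))\<^sup>2"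
    using n unfolding n_def by (simp add: sum.distrib add_divide_distrib)
  have "(\<Sum>i\<in>S. f y (X i \<omega>) + G y (X i \<omega>) \<bullet> (u - y)) \<le> (\<Sum>i\<in>S. f u (X i \<omega>))"
    using sample f_grad f_convex
    by (intro sum_mono convex_gderiv_tangent_lower_bound[of "\<lambda>v. f v (X _ \<omega>)"]) auto
  from divide_right_mono[OF this, of n] have lower: "(\<Sum>i\<in>S. f y (X i \<omega>)) / n + (\<Sum>i\<in>S. G y (X i \<omega>) \<bullet> (u - y)) / n
      \<le> (\<Sum>i\<in>S. f u (X i \<omega>)) / n"
    using n by (simp add: sum.distrib add_divide_distrib)
  show "reg_risk f X c \<gamma> \<alpha> S u \<omega> \<le> reg_risk f X c \<gamma> \<alpha> S y \<omega> + reg_grad G X c \<gamma> \<alpha> S y \<omega> \<bullet> (u - y)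
           + (c * Vstat \<gamma> \<alpha> (card S) + M) / 2 * (norm (u - y))\<^sup>2"
    unfolding risk grad \<mu>_def[symmetric] quad using upper by (simp add: algebra_simps add_divide_distrib)
  show "reg_risk f X c \<gamma> \<alpha> S y \<omega> + reg_grad G X c \<gamma> \<alpha> S y \<omega> \<bullet> (u - y)
           + c * Vstat \<gamma> \<alpha> (card S) / 2 * (norm (u - y))\<^sup>2 \<le> reg_risk f X c \<gamma> \<alpha> S u \<omega>"
    unfolding risk grad \<mu>_def[symmetric] quad using lower by (simp add: algebra_simps add_divide_distrib)
qed

lemma reg_risk_minimizer_quadratic_growth:
  assumes S: "S \<subseteq> {..<N}" "S \<noteq> {}" and \<omega>: "\<omega> \<in> space Q"
    and ws_min: "\<forall>w. reg_risk f X c \<gamma> \<alpha> S ws \<omega> \<le> reg_risk f X c \<gamma> \<alpha> S w \<omega>"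
  shows "reg_risk f X c \<gamma> \<alpha> S u \<omega> \<le> reg_risk f X c \<gamma> \<alpha> S ws \<omega>
           + (c * Vstat \<gamma> \<alpha> (card S) + M) / 2 * (norm (u - ws))\<^sup>2"
    and "reg_risk f X c \<gamma> \<alpha> S ws \<omega> + c * Vstat \<gamma> \<alpha> (card S) / 2 * (norm (u - ws))\<^sup>2
           \<le> reg_risk f X c \<gamma> \<alpha> S u \<omega>"
proof -
  have "0 < c * Vstat \<gamma> \<alpha> (card S) + M"
    using regularization_weight_pos[OF finite_subset[OF S(1) finite_lessThan] S(2)] M_pos by simp
  note growth = smooth_strongly_convex_minimizer[OF this reg_risk_quadratic_bounds[OF S \<omega>]]
  show "reg_risk f X c \<gamma> \<alpha> S u \<omega> \<le> reg_risk f X c \<gamma> \<alpha> S ws \<omega>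
           + (c * Vstat \<gamma> \<alpha> (card S) + M) / 2 * (norm (u - ws))\<^sup>2"
    using growth(2) ws_min by blast
  show "reg_risk f X c \<gamma> \<alpha> S ws \<omega> + c * Vstat \<gamma> \<alpha> (card S) / 2 * (norm (u - ws))\<^sup>2
           \<le> reg_risk f X c \<gamma> \<alpha> S u \<omega>"
    using growth(3) ws_min by blast
qed

lemma borel_measurable_emp_loss:
  assumes S: "S \<subseteq> {..<N}" and w: "w \<in> borel_measurable Q"
  shows "(\<lambda>\<omega>. emp_loss f X S (w \<omega>) \<omega>) \<in> borel_measurable Q"
proof -
  have "(\<lambda>\<omega>. f (w \<omega>) (X i \<omega>)) \<in> borel_measurable Q" if "i \<in> S" for i
  proof -
    have "(\<lambda>\<omega>. (w \<omega>, X i \<omega>)) \<in> measurable Q (borel \<Otimes>\<^sub>M P)"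
      using w X_meas that S by (intro measurable_Pair) auto
    from measurable_compose[OF this f_meas] show ?thesis by simp
  qed
  then show ?thesis unfolding emp_loss_def by (intro borel_measurable_divide borel_measurable_sum) auto
qed

lemma borel_measurable_reg_risk:
  assumes "S \<subseteq> {..<N}" and w: "w \<in> borel_measurable Q"
  shows "(\<lambda>\<omega>. reg_risk f X c \<gamma> \<alpha> S (w \<omega>) \<omega>) \<in> borel_measurable Q"
  unfolding reg_risk_def using borel_measurable_emp_loss[OF assms] w by measurable

lemma borel_measurable_pop_loss: "pop_loss P f \<in> borel_measurable borel"
proof -
  interpret P: prob_space P by (rule P)
  have "(\<lambda>w. \<integral>z. f w z \<partial>P) \<in> borel_measurable borel"
    using f_meas by (intro P.borel_measurable_lebesgue_integral) simp
  then show ?thesis unfolding pop_loss_def[abs_def] .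
qed

lemma borel_measurable_reg_risk_minimizer:
  assumes S: "S \<subseteq> {..<N}" "S \<noteq> {}"
    and ws_min: "\<forall>\<omega>\<in>space Q. \<forall>w. reg_risk f X c \<gamma> \<alpha> S (ws \<omega>) \<omega> \<le> reg_risk f X c \<gamma> \<alpha> S w \<omega>"
  shows "ws \<in> borel_measurable Q"
proof (rule borel_measurable_minimizer[where L = "c * Vstat \<gamma> \<alpha> (card S) + M"
      and \<mu> = "c * Vstat \<gamma> \<alpha> (card S)"])
  show "(\<lambda>\<omega>. reg_risk f X c \<gamma> \<alpha> S w \<omega>) \<in> borel_measurable Q" for w
    using borel_measurable_reg_risk[OF S(1), of "\<lambda>_. w"] by simp
  show "0 < c * Vstat \<gamma> \<alpha> (card S) + M" "0 < c * Vstat \<gamma> \<alpha> (card S)"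
    using regularization_weight_pos[OF finite_subset[OF S(1) finite_lessThan] S(2)] M_pos by simp_all
  fix \<omega> u assume "\<omega> \<in> space Q"
  note growth = reg_risk_minimizer_quadratic_growth[OF S this bspec[OF ws_min this]]
  show "reg_risk f X c \<gamma> \<alpha> S u \<omega> \<le> reg_risk f X c \<gamma> \<alpha> S (ws \<omega>) \<omega>
      + (c * Vstat \<gamma> \<alpha> (card S) + M) / 2 * (norm (u - ws \<omega>))\<^sup>2"
    by (rule growth(1))
  show "reg_risk f X c \<gamma> \<alpha> S (ws \<omega>) \<omega> + c * Vstat \<gamma> \<alpha> (card S) / 2 * (norm (u - ws \<omega>))\<^sup>2
      \<le> reg_risk f X c \<gamma> \<alpha> S u \<omega>"
    by (rule growth(2))
qed

lemma loss_deviation_integrable: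
  assumes S: "S \<subseteq> {..<N}" "S \<noteq> {}" and w: "w \<in> borel_measurable Q"
  shows "integrable Q (\<lambda>\<omega>. loss_deviation S (w \<omega>) \<omega>)
       \<and> integral\<^sup>L Q (\<lambda>\<omega>. loss_deviation S (w \<omega>) \<omega>) \<le> Vstat \<gamma> \<alpha> (card S)"
proof (rule integrable_integral_le_of_nn_integral_le)
  show "(\<lambda>\<omega>. loss_deviation S (w \<omega>) \<omega>) \<in> borel_measurable Q"
    unfolding loss_deviation_def
    using measurable_compose[OF w borel_measurable_pop_loss] borel_measurable_emp_loss[OF S(1) w]
    by measurable
  have "(\<integral>\<^sup>+\<omega>. ennreal (loss_deviation S (w \<omega>) \<omega>) \<partial>Q)
      \<le> (\<integral>\<^sup>+\<omega>. (SUP w. ennreal \<bar>pop_loss P f w - emp_loss f X S w \<omega>\<bar>) \<partial>Q)"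
    unfolding loss_deviation_def by (intro nn_integral_mono SUP_upper) simp
  also have "\<dots> \<le> ennreal (Vstat \<gamma> \<alpha> (card S))" using stat_acc S by blast
  finally show "(\<integral>\<^sup>+\<omega>. ennreal (loss_deviation S (w \<omega>) \<omega>) \<partial>Q) \<le> ennreal (Vstat \<gamma> \<alpha> (card S))" .
qed (simp_all add: loss_deviation_def Vstat_nonneg)

text \<open>Since S_n is S_m together with a disjoint set of the same size, L_n is the mean of two empirical
  losses, each within its uniform deviation of L; the remaining regularization term is controlled through
  R_n(w_n*) \<le> R_n(w*) and L(w*) \<le> L(w_n*).\<close>
lemma reg_risk_gap_integrable:
  assumes S: "S \<subseteq> {..<N}" "S \<noteq> {}" and w: "w \<in> borel_measurable Q"
    and ws_min: "\<forall>\<omega>\<in>space Q. \<forall>u. reg_risk f X c \<gamma> \<alpha> S (ws \<omega>) \<omega> \<le> reg_risk f X c \<gamma> \<alpha> S u \<omega>"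
    and acc: "(\<integral>\<^sup>+\<omega>. ennreal (reg_risk f X c \<gamma> \<alpha> S (w \<omega>) \<omega> - reg_risk f X c \<gamma> \<alpha> S (ws \<omega>) \<omega>) \<partial>Q)
        \<le> ennreal V" and V: "0 \<le> V"
  shows "integrable Q (\<lambda>\<omega>. reg_risk f X c \<gamma> \<alpha> S (w \<omega>) \<omega> - reg_risk f X c \<gamma> \<alpha> S (ws \<omega>) \<omega>)
       \<and> integral\<^sup>L Q (\<lambda>\<omega>. reg_risk f X c \<gamma> \<alpha> S (w \<omega>) \<omega> - reg_risk f X c \<gamma> \<alpha> S (ws \<omega>) \<omega>) \<le> V"
proof (rule integrable_integral_le_of_nn_integral_le[OF _ _ acc V])
  show "(\<lambda>\<omega>. reg_risk f X c \<gamma> \<alpha> S (w \<omega>) \<omega> - reg_risk f X c \<gamma> \<alpha> S (ws \<omega>) \<omega>) \<in> borel_measurable Q"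
    using borel_measurable_reg_risk[OF S(1) w]
      borel_measurable_reg_risk[OF S(1) borel_measurable_reg_risk_minimizer[OF S ws_min]]
    by (rule borel_measurable_diff)
qed (use ws_min in simp)

lemma reg_risk_doubling_gap_le:
  assumes Sn: "finite Sn" and SmSn: "Sm \<subseteq> Sn"
    and card: "card Sn = 2 * card Sm" "0 < card Sm"
    and wms_min: "\<forall>w. reg_risk f X c \<gamma> \<alpha> Sm wms \<omega> \<le> reg_risk f X c \<gamma> \<alpha> Sm w \<omega>"
    and wns_min: "\<forall>w. reg_risk f X c \<gamma> \<alpha> Sn wns \<omega> \<le> reg_risk f X c \<gamma> \<alpha> Sn w \<omega>"
  shows "reg_risk f X c \<gamma> \<alpha> Sn wm \<omega> - reg_risk f X c \<gamma> \<alpha> Sn wns \<omega>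
     \<le> (reg_risk f X c \<gamma> \<alpha> Sm wm \<omega> - reg_risk f X c \<gamma> \<alpha> Sm wms \<omega>)
       + (loss_deviation (Sn - Sm) wm \<omega> + loss_deviation Sm wm \<omega>
          + loss_deviation (Sn - Sm) wns \<omega> + loss_deviation Sm wns \<omega>) / 2
       + (2 powr \<alpha> - 1) * (loss_deviation Sn wstar \<omega> + loss_deviation Sn wns \<omega>
          + c * Vstat \<gamma> \<alpha> (card Sn) / 2 * (norm wstar)\<^sup>2)"
proof -
  define D where "D = Sn - Sm"
  define a where "a = c * Vstat \<gamma> \<alpha> (card Sn) / 2"
  define r where "r = 2 powr \<alpha> - 1"
  have r: "0 \<le> r" unfolding r_def using \<alpha>_nonneg ge_one_powr_ge_zero[of 2 \<alpha>] by simp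
  have a: "0 \<le> a" unfolding a_def Vstat_def using c_pos \<gamma>_pos by simp
  have card_D: "card D = card Sm" unfolding D_def using card_Diff_half[OF Sn SmSn card(1)] .
  have emp_split: "emp_loss f X Sn w \<omega> = (emp_loss f X Sm w \<omega> + emp_loss f X D w \<omega>) / 2" for w
  proof -
    have "(\<Sum>i\<in>Sn. f w (X i \<omega>)) = (\<Sum>i\<in>D. f w (X i \<omega>)) + (\<Sum>i\<in>Sm. f w (X i \<omega>))"
      unfolding D_def by (rule sum.subset_diff[OF SmSn Sn])
    then show ?thesis unfolding emp_loss_def card card_D using card(2) by (simp add: field_simps)
  qed
  have "Vstat \<gamma> \<alpha> (card Sm) = 2 powr \<alpha> * Vstat \<gamma> \<alpha> (card Sn)"
    unfolding card(1) using Vstat_double[OF card(2)] .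
  then have Rm: "reg_risk f X c \<gamma> \<alpha> Sm w \<omega> = emp_loss f X Sm w \<omega> + a * (norm w)\<^sup>2 + r * (a * (norm w)\<^sup>2)"
    for w unfolding reg_risk_def a_def r_def by (simp add: field_simps)
  have Rn: "reg_risk f X c \<gamma> \<alpha> Sn w \<omega> = emp_loss f X Sn w \<omega> + a * (norm w)\<^sup>2" for w
    unfolding reg_risk_def a_def by simp
  have dev: "pop_loss P f w - emp_loss f X S w \<omega> \<le> loss_deviation S w \<omega>"
    "emp_loss f X S w \<omega> - pop_loss P f w \<le> loss_deviation S w \<omega>" for S w
    unfolding loss_deviation_def by auto
  have "a * (norm wns)\<^sup>2 \<le> loss_deviation Sn wstar \<omega> + loss_deviation Sn wns \<omega> + a * (norm wstar)\<^sup>2"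
    using wns_min[rule_format, of wstar] wstar_min[rule_format, of wns]
      dev[where S = Sn and w = wstar] dev[where S = Sn and w = wns] unfolding Rn
    by linarith
  from mult_left_mono[OF this r]
  have regularization: "r * (a * (norm wns)\<^sup>2)
      \<le> r * (loss_deviation Sn wstar \<omega> + loss_deviation Sn wns \<omega> + a * (norm wstar)\<^sup>2)" .
  have "0 \<le> r * (a * (norm wm)\<^sup>2)" using r a by simp
  then show ?thesis
    using wms_min[rule_format, of wns] regularization dev[where S = D and w = wm]
      dev[where S = Sm and w = wm] dev[where S = D and w = wns] dev[where S = Sm and w = wns]
    unfolding Rn Rm emp_split D_def[symmetric] a_def[symmetric] r_def[symmetric]
    by (simp add: field_simps)
qed

lemma expected_initial_gap_le:
  assumes SmSn: "Sm \<subseteq> Sn" and SnN: "Sn \<subseteq> {..<N}"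
    and card: "card Sn = 2 * card Sm" "0 < card Sm"
    and wm: "wm \<in> borel_measurable Q"
    and wms_min: "\<forall>\<omega>\<in>space Q. \<forall>w. reg_risk f X c \<gamma> \<alpha> Sm (wms \<omega>) \<omega> \<le> reg_risk f X c \<gamma> \<alpha> Sm w \<omega>"
    and wns_min: "\<forall>\<omega>\<in>space Q. \<forall>w. reg_risk f X c \<gamma> \<alpha> Sn (wns \<omega>) \<omega> \<le> reg_risk f X c \<gamma> \<alpha> Sn w \<omega>"
    and wm_acc: "(\<integral>\<^sup>+\<omega>. ennreal (reg_risk f X c \<gamma> \<alpha> Sm (wm \<omega>) \<omega> - reg_risk f X c \<gamma> \<alpha> Sm (wms \<omega>) \<omega>) \<partial>Q)
        \<le> ennreal (Vstat \<gamma> \<alpha> (card Sm))"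
  shows "integrable Q (\<lambda>\<omega>. reg_risk f X c \<gamma> \<alpha> Sn (wm \<omega>) \<omega> - reg_risk f X c \<gamma> \<alpha> Sn (wns \<omega>) \<omega>)
       \<and> integral\<^sup>L Q (\<lambda>\<omega>. reg_risk f X c \<gamma> \<alpha> Sn (wm \<omega>) \<omega> - reg_risk f X c \<gamma> \<alpha> Sn (wns \<omega>) \<omega>)
         \<le> gap_factor \<alpha> c wstar / 2 * Vstat \<gamma> \<alpha> (card Sn)"
proof -
  interpret Q: prob_space Q by (rule Q)
  define Rm where "Rm w \<omega> = reg_risk f X c \<gamma> \<alpha> Sm w \<omega>" for w \<omega>
  define Rn where "Rn w \<omega> = reg_risk f X c \<gamma> \<alpha> Sn w \<omega>" for w \<omega>
  define Vm where "Vm = Vstat \<gamma> \<alpha> (card Sm)"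
  define Vn where "Vn = Vstat \<gamma> \<alpha> (card Sn)"
  define r where "r = 2 powr \<alpha> - 1"
  define D where "D = Sn - Sm"
  have Sn: "finite Sn" using SnN finite_subset by blast
  have SmN: "Sm \<subseteq> {..<N}" "Sm \<noteq> {}" using SmSn SnN card(2) by auto
  have SnN': "Sn \<subseteq> {..<N}" "Sn \<noteq> {}" using SnN card by auto
  have card_D: "card D = card Sm" unfolding D_def using card_Diff_half[OF Sn SmSn card(1)] .
  have "D \<noteq> {}" using card_D card(2) by (metis card.empty less_irrefl)
  then have DN: "D \<subseteq> {..<N}" "D \<noteq> {}" unfolding D_def using SnN by auto
  have r: "0 \<le> r" unfolding r_def using \<alpha>_nonneg ge_one_powr_ge_zero[of 2 \<alpha>] by simp
  have Vm: "Vm = (1 + r) * Vn"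
    unfolding Vm_def Vn_def r_def card(1) using Vstat_double[OF card(2)] by simp
  have wms: "wms \<in> borel_measurable Q" by (rule borel_measurable_reg_risk_minimizer[OF SmN wms_min])
  have wns: "wns \<in> borel_measurable Q" by (rule borel_measurable_reg_risk_minimizer[OF SnN' wns_min])
  define H where "H \<omega> = (Rm (wm \<omega>) \<omega> - Rm (wms \<omega>) \<omega>)
      + 1 / 2 * (loss_deviation D (wm \<omega>) \<omega> + loss_deviation Sm (wm \<omega>) \<omega>
                + loss_deviation D (wns \<omega>) \<omega> + loss_deviation Sm (wns \<omega>) \<omega>)
      + r * (loss_deviation Sn wstar \<omega> + loss_deviation Sn (wns \<omega>) \<omega>
                + c * Vn / 2 * (norm wstar)\<^sup>2)" for \<omega>
  have gap_le_H: "Rn (wm \<omega>) \<omega> - Rn (wns \<omega>) \<omega> \<le> H \<omega>" if "\<omega> \<in> space Q" for \<omega>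
    using reg_risk_doubling_gap_le[OF Sn SmSn card bspec[OF wms_min that] bspec[OF wns_min that]]
    unfolding H_def Rm_def Rn_def D_def r_def Vn_def by simp
  have gap_nonneg: "0 \<le> Rn (wm \<omega>) \<omega> - Rn (wns \<omega>) \<omega>" if "\<omega> \<in> space Q" for \<omega>
    using wns_min that unfolding Rn_def by simp
  have initial: "integrable Q (\<lambda>\<omega>. Rm (wm \<omega>) \<omega> - Rm (wms \<omega>) \<omega>)
      \<and> integral\<^sup>L Q (\<lambda>\<omega>. Rm (wm \<omega>) \<omega> - Rm (wms \<omega>) \<omega>) \<le> Vm"
    unfolding Rm_def Vm_def
    using wm_acc Vstat_nonneg by (intro reg_risk_gap_integrable[OF SmN wm wms_min])
  note dev = loss_deviation_integrable[OF DN, unfolded card_D] loss_deviation_integrable[OF SmN]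
    loss_deviation_integrable[OF SnN']
  have "integrable Q H \<and> integral\<^sup>L Q H
      \<le> Vm + 1 / 2 * (Vm + Vm + Vm + Vm) + r * (Vn + Vn + c * Vn / 2 * (norm wstar)\<^sup>2)"
    unfolding H_def[abs_def] Vm_def Vn_def
    using dev(1)[OF wm] dev(2)[OF wm] dev(1)[OF wns] dev(2)[OF wns]
      dev(3)[of "\<lambda>_. wstar"] dev(3)[OF wns] initial[unfolded Vm_def] r
    by (intro integrable_integral_le_add integrable_integral_le_cmult Q.integrable_integral_le_const)
      simp_all
  moreover have "Vm + 1 / 2 * (Vm + Vm + Vm + Vm) + r * (Vn + Vn + c * Vn / 2 * (norm wstar)\<^sup>2)
      = gap_factor \<alpha> c wstar / 2 * Vn"
    unfolding Vm gap_factor_def r_def by (simp add: field_simps)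
  ultimately have "integrable Q H \<and> integral\<^sup>L Q H \<le> gap_factor \<alpha> c wstar / 2 * Vn" by simp
  moreover have "(\<lambda>\<omega>. Rn (wm \<omega>) \<omega> - Rn (wns \<omega>) \<omega>) \<in> borel_measurable Q"
    unfolding Rn_def using borel_measurable_reg_risk[OF SnN wm] borel_measurable_reg_risk[OF SnN wns]
    by (rule borel_measurable_diff)
  ultimately show ?thesis
    using gap_nonneg gap_le_H unfolding Rn_def Vn_def by (rule integrable_integral_le_of_dominated)
qed

lemma agd_gap_contraction:
  assumes S: "S \<subseteq> {..<N}" "S \<noteq> {}" and \<omega>: "\<omega> \<in> space Q"
    and ws_min: "\<forall>w. reg_risk f X c \<gamma> \<alpha> S ws \<omega> \<le> reg_risk f X c \<gamma> \<alpha> S w \<omega>"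
    and s: "iter_bound \<alpha> c \<gamma> M wstar (card S) \<le> real s"
  shows "reg_risk f X c \<gamma> \<alpha> S (fst (agd (\<lambda>y. reg_grad G X c \<gamma> \<alpha> S y \<omega>)
             (agd_eta c \<gamma> \<alpha> M (card S)) (agd_beta c \<gamma> \<alpha> M (card S)) w0 s)) \<omega>
           - reg_risk f X c \<gamma> \<alpha> S ws \<omega>
         \<le> 2 / gap_factor \<alpha> c wstar * (reg_risk f X c \<gamma> \<alpha> S w0 \<omega> - reg_risk f X c \<gamma> \<alpha> S ws \<omega>)"
proof -
  define \<mu> where "\<mu> = c * Vstat \<gamma> \<alpha> (card S)"
  define F where "F = gap_factor \<alpha> c wstar"
  define \<tau> where "\<tau> = sqrt \<mu> / sqrt (\<mu> + M)"
  have \<mu>: "0 < \<mu>" unfolding \<mu>_def using regularization_weight_pos[OF finite_subset[OF S(1) finite_lessThan] S(2)] .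
  have F: "0 < F" unfolding F_def using gap_factor_ge_6[of \<alpha> c wstar] \<alpha>_nonneg c_pos by simp
  have \<tau>: "0 < \<tau>" "\<tau> \<le> 1" unfolding \<tau>_def using \<mu> M_pos by (auto simp: real_sqrt_le_iff)
  have ratio: "(\<mu> + M) / \<mu> = (real (card S) powr \<alpha> * M + c * \<gamma>) / (c * \<gamma>)"
    unfolding \<mu>_def Vstat_def using c_pos \<gamma>_pos S(2) finite_subset[OF S(1) finite_lessThan]
    by (simp add: field_simps card_gt_0_iff)
  have inverse_\<tau>: "1 / \<tau> = sqrt ((real (card S) powr \<alpha> * M + c * \<gamma>) / (c * \<gamma>))"
    unfolding ratio[symmetric] \<tau>_def by (simp add: real_sqrt_divide)
  then have "ln F / \<tau> = iter_bound \<alpha> c \<gamma> M wstar (card S)"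
    unfolding iter_bound_def log_factor_eq_ln_gap_factor F_def inverse_\<tau>[symmetric] by simp
  then have rate: "(1 - \<tau>) ^ s \<le> 1 / F"
    using s by (intro one_minus_power_le_inverse[OF \<tau> F]) simp
  have "reg_risk f X c \<gamma> \<alpha> S (fst (agd (\<lambda>y. reg_grad G X c \<gamma> \<alpha> S y \<omega>)
             (agd_eta c \<gamma> \<alpha> M (card S)) (agd_beta c \<gamma> \<alpha> M (card S)) w0 s)) \<omega>
           - reg_risk f X c \<gamma> \<alpha> S ws \<omega>
        \<le> 2 * (1 - \<tau>) ^ s * (reg_risk f X c \<gamma> \<alpha> S w0 \<omega> - reg_risk f X c \<gamma> \<alpha> S ws \<omega>)"
    unfolding agd_eta_def agd_beta_def \<tau>_def \<mu>_def
  proof (rule agd_convergence[where R = "\<lambda>u. reg_risk f X c \<gamma> \<alpha> S u \<omega>"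
        and g = "\<lambda>y. reg_grad G X c \<gamma> \<alpha> S y \<omega>"])
    show "0 < c * Vstat \<gamma> \<alpha> (card S)" "c * Vstat \<gamma> \<alpha> (card S) \<le> c * Vstat \<gamma> \<alpha> (card S) + M"
      using \<mu> M_pos unfolding \<mu>_def by simp_all
  qed (use reg_risk_quadratic_bounds[OF S \<omega>] ws_min in auto)
  also have "\<dots> \<le> 2 * (1 / F) * (reg_risk f X c \<gamma> \<alpha> S w0 \<omega> - reg_risk f X c \<gamma> \<alpha> S ws \<omega>)"
    using rate ws_min by (intro mult_right_mono mult_left_mono) auto
  finally show ?thesis unfolding F_def by simp
qed

lemma agd_doubling_stage:
  assumes m: "1 \<le> m" and SmSn: "Sm \<subseteq> Sn" and SnN: "Sn \<subseteq> {..<N}"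
    and cSm: "card Sm = m" and cSn: "card Sn = 2 * m"
    and wm: "wm \<in> borel_measurable Q"
    and wms_min: "\<forall>\<omega>\<in>space Q. \<forall>w. reg_risk f X c \<gamma> \<alpha> Sm (wms \<omega>) \<omega> \<le> reg_risk f X c \<gamma> \<alpha> Sm w \<omega>"
    and wns_min: "\<forall>\<omega>\<in>space Q. \<forall>w. reg_risk f X c \<gamma> \<alpha> Sn (wns \<omega>) \<omega> \<le> reg_risk f X c \<gamma> \<alpha> Sn w \<omega>"
    and wm_acc: "(\<integral>\<^sup>+\<omega>. ennreal (reg_risk f X c \<gamma> \<alpha> Sm (wm \<omega>) \<omega> - reg_risk f X c \<gamma> \<alpha> Sm (wms \<omega>) \<omega>) \<partial>Q)
        \<le> ennreal (Vstat \<gamma> \<alpha> m)"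
    and s: "iter_bound \<alpha> c \<gamma> M wstar (2 * m) \<le> real s"
  shows "(\<integral>\<^sup>+\<omega>. ennreal (reg_risk f X c \<gamma> \<alpha> Sn
                 (fst (agd (\<lambda>y. reg_grad G X c \<gamma> \<alpha> Sn y \<omega>)
                           (agd_eta c \<gamma> \<alpha> M (2 * m)) (agd_beta c \<gamma> \<alpha> M (2 * m)) (wm \<omega>) s)) \<omega>
               - reg_risk f X c \<gamma> \<alpha> Sn (wns \<omega>) \<omega>) \<partial>Q)
          \<le> ennreal (Vstat \<gamma> \<alpha> (2 * m))"
proof -
  define F where "F = gap_factor \<alpha> c wstar"
  define gap where "gap \<omega> = reg_risk f X c \<gamma> \<alpha> Sn (wm \<omega>) \<omega> - reg_risk f X c \<gamma> \<alpha> Sn (wns \<omega>) \<omega>" for \<omega>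
  have F: "0 < F" unfolding F_def using gap_factor_ge_6[of \<alpha> c wstar] \<alpha>_nonneg c_pos by simp
  have card: "card Sn = 2 * card Sm" "0 < card Sm" using cSm cSn m by simp_all
  have Sn: "Sn \<subseteq> {..<N}" "Sn \<noteq> {}" using SnN card by auto
  have "integrable Q gap \<and> integral\<^sup>L Q gap \<le> F / 2 * Vstat \<gamma> \<alpha> (2 * m)"
    using expected_initial_gap_le[OF SmSn SnN card wm wms_min wns_min] wm_acc
    unfolding gap_def F_def cSm cSn by simp
  from integrable_integral_le_cmult[OF this, of "2 / F"]
  have scaled: "integrable Q (\<lambda>\<omega>. 2 / F * gap \<omega>) \<and> integral\<^sup>L Q (\<lambda>\<omega>. 2 / F * gap \<omega>) \<le> Vstat \<gamma> \<alpha> (2 * m)"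
    using F by simp
  have gap_nonneg: "0 \<le> 2 / F * gap \<omega>" if "\<omega> \<in> space Q" for \<omega>
    using wns_min that F unfolding gap_def by simp
  have "(\<integral>\<^sup>+\<omega>. ennreal (reg_risk f X c \<gamma> \<alpha> Sn
                 (fst (agd (\<lambda>y. reg_grad G X c \<gamma> \<alpha> Sn y \<omega>)
                           (agd_eta c \<gamma> \<alpha> M (2 * m)) (agd_beta c \<gamma> \<alpha> M (2 * m)) (wm \<omega>) s)) \<omega>
               - reg_risk f X c \<gamma> \<alpha> Sn (wns \<omega>) \<omega>) \<partial>Q)
      \<le> (\<integral>\<^sup>+\<omega>. ennreal (2 / F * gap \<omega>) \<partial>Q)"
    using agd_gap_contraction[OF Sn _ bspec[OF wns_min]] s
    unfolding F_def gap_def cSn by (intro nn_integral_mono ennreal_leI) simp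
  also have "\<dots> = ennreal (integral\<^sup>L Q (\<lambda>\<omega>. 2 / F * gap \<omega>))"
    using scaled gap_nonneg by (intro nn_integral_eq_integral) auto
  also have "\<dots> \<le> ennreal (Vstat \<gamma> \<alpha> (2 * m))" using scaled by (intro ennreal_leI) simp
  finally show ?thesis .
qed

end

lemma iter_bound_le:
  assumes K: "0 < c * \<gamma>" and M: "0 \<le> M" and LF: "0 \<le> log_factor \<alpha> c wstar"
  shows "iter_bound \<alpha> c \<gamma> M wstar n
         \<le> (1 + sqrt (real n powr \<alpha> * M / (c * \<gamma>))) * log_factor \<alpha> c wstar"
proof -
  define x where "x = real n powr \<alpha> * M / (c * \<gamma>)"
  have x: "0 \<le> x" unfolding x_def using M K by simp
  have "(real n powr \<alpha> * M + c * \<gamma>) / (c * \<gamma>) = x + 1"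
    unfolding x_def using K by (auto simp: add_divide_distrib zero_less_mult_iff)
  then have "iter_bound \<alpha> c \<gamma> M wstar n = sqrt (x + 1) * log_factor \<alpha> c wstar"
    unfolding iter_bound_def by simp
  also have "\<dots> \<le> (1 + sqrt x) * log_factor \<alpha> c wstar"
    using sqrt_add_le_add_sqrt[OF x, of 1] LF by (intro mult_right_mono) auto
  finally show ?thesis unfolding x_def .
qed

lemma real_power2_powr: "real ((2::nat) ^ k) powr \<alpha> = (2 powr \<alpha>) ^ k"
proof -
  have "real ((2::nat) ^ k) powr \<alpha> = 2 powr (real k * \<alpha>)"
    by (simp add: powr_realpow[symmetric] powr_powr)
  also have "\<dots> = (2 powr \<alpha>) ^ k" by (simp add: powr_power)
  finally show ?thesis .
qed

lemma geometric_reverse_sum_le: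
  fixes r :: real
  assumes "0 < r" "r < 1"
  shows "(\<Sum>j\<le>q. r ^ (q - j)) \<le> 1 / (1 - r)"
proof -
  have "(\<Sum>j\<le>q. r ^ (q - j)) = (\<Sum>j<Suc q. r ^ (Suc q - Suc j))"
    by (simp add: lessThan_Suc_atMost)
  also have "\<dots> = (\<Sum>j<Suc q. r ^ j)"
    by (rule sum.nat_diff_reindex)
  also have "\<dots> \<le> 1 / (1 - r)"
    using geometric_sum_less[OF assms, of "{..<Suc q}"] by simp
  finally show ?thesis .
qed

lemma doubling_stage_cost_le:
  fixes M c \<gamma> \<alpha> :: real and wstar :: "'a::real_normed_vector"
  assumes M: "0 < M" and K: "0 < c * \<gamma>" and LF: "0 \<le> log_factor \<alpha> c wstar"
    and N: "N = 2 ^ q * m0" and j: "j \<le> q"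
  shows "real (2 ^ j * m0) * iter_bound \<alpha> c \<gamma> M wstar (2 ^ j * m0)
    \<le> real N * (1 + sqrt (real N powr \<alpha> * M / (c * \<gamma>)) * (1 / sqrt (2 powr \<alpha>)) ^ (q - j))
        * log_factor \<alpha> c wstar"
proof -
  define n where "n = 2 ^ j * m0"
  define s where "s = sqrt (2 powr \<alpha>)"
  have s: "0 < s" unfolding s_def by simp
  have N_n: "N = 2 ^ (q - j) * n" unfolding N n_def using j by (simp add: power_add[symmetric])
  have "real N powr \<alpha> * M / (c * \<gamma>) = (2 powr \<alpha>) ^ (q - j) * (real n powr \<alpha> * M / (c * \<gamma>))"
    unfolding N_n by (simp add: powr_mult real_power2_powr del: of_nat_power)
  then have "sqrt (real N powr \<alpha> * M / (c * \<gamma>)) = s ^ (q - j) * sqrt (real n powr \<alpha> * M / (c * \<gamma>))"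
    unfolding s_def by (simp only: real_sqrt_mult real_sqrt_power)
  then have sqrt_n: "sqrt (real n powr \<alpha> * M / (c * \<gamma>))
      = sqrt (real N powr \<alpha> * M / (c * \<gamma>)) * (1 / s) ^ (q - j)"
    using s by (simp add: power_one_over field_simps)
  have "1 * n \<le> 2 ^ (q - j) * n" by (intro mult_le_mono1) simp
  then have "real n \<le> real N" unfolding N_n by linarith
  have "real n * iter_bound \<alpha> c \<gamma> M wstar n
      \<le> real n * ((1 + sqrt (real N powr \<alpha> * M / (c * \<gamma>)) * (1 / s) ^ (q - j)) * log_factor \<alpha> c wstar)"
    using iter_bound_le[OF K less_imp_le[OF M] LF, of n] unfolding sqrt_n by (intro mult_left_mono) auto
  also have "\<dots> \<le> real N * ((1 + sqrt (real N powr \<alpha> * M / (c * \<gamma>)) * (1 / s) ^ (q - j))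
      * log_factor \<alpha> c wstar)"
    using \<open>real n \<le> real N\<close> LF s M K by (intro mult_right_mono) (auto intro!: mult_nonneg_nonneg)
  finally show ?thesis unfolding n_def s_def by (simp only: mult.assoc)
qed

lemma doubling_schedule_cost_le:
  fixes M c \<gamma> \<alpha> :: real and wstar :: "'a::real_normed_vector"
  assumes M: "0 < M" and K: "0 < c * \<gamma>" and c: "0 \<le> c" and \<alpha>: "0 < \<alpha>"
    and m0: "1 \<le> m0" and N: "N = 2 ^ q * m0"
  shows "(\<Sum>j\<le>q. real (2 ^ j * m0) * iter_bound \<alpha> c \<gamma> M wstar (2 ^ j * m0))
          \<le> real N * (1 + log 2 (real N / real m0)
                + sqrt (2 powr \<alpha>) / (sqrt (2 powr \<alpha>) - 1) * sqrt (real N powr \<alpha> * M / (c * \<gamma>)))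
            * log_factor \<alpha> c wstar"
proof -
  define LF where "LF = log_factor \<alpha> c wstar"
  have LF: "0 \<le> LF" unfolding LF_def using \<alpha> c by (intro log_factor_nonneg) auto
  define s where "s = sqrt (2 powr \<alpha>)"
  have s: "1 < s" unfolding s_def using \<alpha> by (simp add: real_less_rsqrt)
  define SN where "SN = sqrt (real N powr \<alpha> * M / (c * \<gamma>))"
  have SN: "0 \<le> SN" unfolding SN_def using M K by simp
  have "(\<Sum>j\<le>q. real (2 ^ j * m0) * iter_bound \<alpha> c \<gamma> M wstar (2 ^ j * m0))
      \<le> (\<Sum>j\<le>q. real N * (1 + SN * (1 / s) ^ (q - j)) * LF)"
    using doubling_stage_cost_le[OF M K LF[unfolded LF_def] N] unfolding SN_def s_def LF_def
    by (intro sum_mono) auto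
  also have "\<dots> = real (Suc q) * real N * LF + real N * SN * LF * (\<Sum>j\<le>q. (1 / s) ^ (q - j))"
    by (simp add: sum.distrib sum_distrib_left sum_distrib_right algebra_simps)
  also have "\<dots> \<le> real (Suc q) * real N * LF + real N * SN * LF * (1 / (1 - 1 / s))"
    using geometric_reverse_sum_le[of "1 / s" q] s SN LF
    by (intro add_left_mono mult_left_mono) auto
  also have "1 / (1 - 1 / s) = s / (s - 1)" using s by (simp add: field_simps)
  also have "real (Suc q) = 1 + log 2 (real N / real m0)"
    unfolding N using m0 by (simp add: log_nat_power)
  finally show ?thesis unfolding SN_def s_def LF_def by (simp add: algebra_simps)
qed

theorem theorem3:
  fixes Q :: "'o measure" and P :: "'z measure"
    and X :: "nat \<Rightarrow> 'o \<Rightarrow> 'z" and N :: nat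
    and f :: "'a::euclidean_space \<Rightarrow> 'z \<Rightarrow> real" and G :: "'a \<Rightarrow> 'z \<Rightarrow> 'a"
    and M c \<gamma> \<alpha> :: real and wstar :: 'a
  assumes Q: "prob_space Q" and P: "prob_space P"
    and X_meas: "\<forall>i<N. X i \<in> measurable Q P"
    and X_distr: "\<forall>i<N. distr Q P (X i) = P"
    and X_indep: "prob_space.indep_vars Q (\<lambda>_. P) X {..<N}"
    and f_meas: "(\<lambda>(w, z). f w z) \<in> borel_measurable (borel \<Otimes>\<^sub>M P)"
    and f_convex: "\<forall>z\<in>space P. convex_on UNIV (\<lambda>w. f w z)"
    and f_grad: "\<forall>z\<in>space P. \<forall>w. GDERIV (\<lambda>v. f v z) w :> G w z"
    and M_pos: "M > 0"
    and G_lip: "\<forall>z\<in>space P. \<forall>w v. norm (G w z - G v z) \<le> M * norm (w - v)"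
    and \<gamma>_pos: "\<gamma> > 0" and \<alpha>_range: "1/2 \<le> \<alpha>" "\<alpha> \<le> 1" and c_pos: "c > 0"
    and stat_acc: "\<forall>S. S \<subseteq> {..<N} \<and> S \<noteq> {} \<longrightarrow>
        (\<integral>\<^sup>+\<omega>. (SUP w. ennreal \<bar>pop_loss P f w - emp_loss f X S w \<omega>\<bar>) \<partial>Q)
          \<le> ennreal (Vstat \<gamma> \<alpha> (card S))"
    and wstar_min: "\<forall>w. pop_loss P f wstar \<le> pop_loss P f w"
  shows
    "(\<forall>(m::nat) Sm Sn (wm :: 'o \<Rightarrow> 'a) wms wns (s::nat).
        1 \<le> m \<and> Sm \<subseteq> Sn \<and> Sn \<subseteq> {..<N} \<and> card Sm = m \<and> card Sn = 2 * m
        \<and> wm \<in> borel_measurable Q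
        \<and> (\<forall>\<omega>\<in>space Q. \<forall>w. reg_risk f X c \<gamma> \<alpha> Sm (wms \<omega>) \<omega> \<le> reg_risk f X c \<gamma> \<alpha> Sm w \<omega>)
        \<and> (\<forall>\<omega>\<in>space Q. \<forall>w. reg_risk f X c \<gamma> \<alpha> Sn (wns \<omega>) \<omega> \<le> reg_risk f X c \<gamma> \<alpha> Sn w \<omega>)
        \<and> (\<integral>\<^sup>+\<omega>. ennreal (reg_risk f X c \<gamma> \<alpha> Sm (wm \<omega>) \<omega> - reg_risk f X c \<gamma> \<alpha> Sm (wms \<omega>) \<omega>) \<partial>Q)
            \<le> ennreal (Vstat \<gamma> \<alpha> m)
        \<and> real s \<ge> iter_bound \<alpha> c \<gamma> M wstar (2 * m)
        \<longrightarrow>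
        (\<integral>\<^sup>+\<omega>. ennreal (reg_risk f X c \<gamma> \<alpha> Sn
                 (fst (agd (\<lambda>y. reg_grad G X c \<gamma> \<alpha> Sn y \<omega>)
                           (agd_eta c \<gamma> \<alpha> M (2 * m)) (agd_beta c \<gamma> \<alpha> M (2 * m)) (wm \<omega>) s)) \<omega>
               - reg_risk f X c \<gamma> \<alpha> Sn (wns \<omega>) \<omega>) \<partial>Q)
          \<le> ennreal (Vstat \<gamma> \<alpha> (2 * m)))
     \<and>
     (\<forall>(m0::nat) (q::nat). 1 \<le> m0 \<and> N = 2 ^ q * m0 \<longrightarrow>
        (\<Sum>j\<le>q. real (2 ^ j * m0) * iter_bound \<alpha> c \<gamma> M wstar (2 ^ j * m0))
          \<le> real N * (1 + log 2 (real N / real m0)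
                + sqrt (2 powr \<alpha>) / (sqrt (2 powr \<alpha>) - 1) * sqrt (real N powr \<alpha> * M / (c * \<gamma>)))
            * log_factor \<alpha> c wstar)"
proof -
  interpret regularized_erm Q P X N f G M c \<gamma> \<alpha> wstar
    using \<alpha>_range
    by (intro regularized_erm.intro[OF Q P X_meas f_meas f_convex f_grad M_pos G_lip \<gamma>_pos _ c_pos
          stat_acc wstar_min]) simp
  have "0 < c * \<gamma>" "0 \<le> c" "0 < \<alpha>" using c_pos \<gamma>_pos \<alpha>_range by simp_all
  note cost = doubling_schedule_cost_le[OF M_pos this]
  show ?thesis
  proof (intro conjI allI impI; elim conjE)
  qed ((rule agd_doubling_stage; assumption), (rule cost; assumption))
qed

end
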